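(* Let $\vec{k}=(k_1,\dots,k_\ell)$ be any vector of positive integers and let $a$ be any positive integer. Then the polynomial $$\widetilde{C}_{^a\mathcal{K}}(q,t)=\sum_{\pi\in\mathcal{D}_{^a\mathcal{K}}} q^{\mathrm{area}(\pi)}t^{\mathrm{depth}(\pi)}$$ is $q,t$-symmetric, i.e. $\widetilde{C}_{^a\mathcal{K}}(q,t)=\widetilde{C}_{^a\mathcal{K}}(t,q)$.
   Context: For a vector $\vec{u}=(u_1,\dots,u_m)$ of positive integers put $|\vec u|=u_1+\cdots+u_m$ and $N=|\vec u|+m$. A $\vec u$-Dyck path is a word $\pi=\pi_1\cdots\pi_N$ containing the letters $S^{u_1},S^{u_2},\dots,S^{u_m}$ exactly once each and in this order from left to right, together with $|\vec u|$ letters $W$, such that all starting ranks are nonnegative, where the starting ranks are $r_1=0$, $r_{i+1}=r_i+u_j$ if $\pi_i=S^{u_j}$ and $r_{i+1}=r_i-1$ if $\pi_i=W$. (Equivalently: a lattice path from $(0,0)$ to $(N,0)$ with up steps $(1,u_1),\dots,(1,u_m)$ in this order and down steps $(1,-1)$, never going below the horizontal axis.) $\mathcal{D}_{\vec u}$ denotes the set of such paths. The area sequence is $(a_1,\dots,a_m)$ with $a_j$ the starting rank of the letter $S^{u_j}$, and $\mathrm{area}(\pi)=a_1+\cdots+a_m$. Filling algorithm $\eta_*$: consider a tableau of $m$ top-justified columns, column $i$ having $u_i+1$ cells. Place $1$ at the top of column $1$. For $i=2,\dots,N$: call an entry active if it is currently the bottom entry of a column $i'$ that does not yet contain $u_{i'}+1$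 entries; if $\pi_i=W$, place $i$ immediately below the largest active entry; otherwise place $i$ at the top of the first empty column. The result is $\eta_*(\pi)$. Ranking algorithm $\gamma_*$: in the tableau of the same shape, give column $1$ the ranks $0,1,\dots,u_1$ from top to bottom; for $i\ge 2$, if the top entry of column $i$ of $\eta_*(\pi)$ is $A+1$ and $A$ has rank $\alpha$, give column $i$ the ranks $\alpha,\alpha+1,\dots,\alpha+u_i$ from top to bottom. The depth labeling sequence $(d_1,\dots,d_m)$ is the first row of the ranking tableau, and $\mathrm{depth}(\pi)=d_1+\cdots+d_m$. For $\vec k=(k_1,\dots,k_\ell)$, $\mathcal{K}$ is the set of all distinct rearrangements of $\vec k$, ${}^a\mathcal{K}=\{(a,j_1,\dots,j_\ell):(j_1,\dots,j_\ell)\in\mathcal{K}\}$, and $\mathcal{D}_{^a\mathcal{K}}$ is the union of $\mathcal{D}_{\vec u}$ over $\vec u\in{}^a\mathcal{K}$. *)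

theory Defs
  imports "HOL-Library.Multiset"
begin

text \<open>Letters of a u-Dyck word: \<open>S n\<close> is the up letter S^n, \<open>W\<close> the down letter.\<close>
datatype letter = S nat | W

fun letter_step :: "letter \<Rightarrow> int" where
  "letter_step (S n) = int n"
| "letter_step W = -1"

definition start_rank :: "letter list \<Rightarrow> nat \<Rightarrow> int" where
  "start_rank w i = (\<Sum>x\<leftarrow>take i w. letter_step x)"

fun up_size :: "letter \<Rightarrow> nat option" where
  "up_size (S n) = Some n"
| "up_size W = None"

definition ups :: "letter list \<Rightarrow> nat list" where
  "ups w = map the (filter (\<lambda>x. x \<noteq> None) (map up_size w))"

definition dyck_paths :: "nat list \<Rightarrow> letter list set" where
  "dyck_paths u = {w. ups w = u \<and> length (filter (\<lambda>x. x = W) w) = sum_list u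
                     \<and> (\<forall>i < length w. start_rank w i \<ge> 0)}"

definition area :: "letter list \<Rightarrow> int" where
  "area w = (\<Sum>i<length w. if w ! i = W then 0 else start_rank w i)"

text \<open>Filling algorithm. A tableau is a list of columns, each column the list of its
  entries from top to bottom; column \<open>j\<close> (0-indexed) has \<open>us ! j + 1\<close> cells.\<close>
definition active_cols :: "nat list \<Rightarrow> nat list list \<Rightarrow> nat set" where
  "active_cols us cols = {j. j < length cols \<and> cols ! j \<noteq> [] \<and> length (cols ! j) < us ! j + 1}"

definition place_W :: "nat list \<Rightarrow> nat list list \<Rightarrow> nat \<Rightarrow> nat list list" where
  "place_W us cols i =
     (let J = active_cols us cols;
          j = (SOME j. j \<in> J \<and> (\<forall>j'\<in>J. last (cols ! j') \<le> last (cols ! j)))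
      in cols[j := cols ! j @ [i]])"

definition place_S :: "nat list list \<Rightarrow> nat \<Rightarrow> nat list list" where
  "place_S cols i = (let j = (LEAST j. j < length cols \<and> cols ! j = []) in cols[j := [i]])"

definition filling :: "letter list \<Rightarrow> nat list list" where
  "filling w =
     (let us = ups w in
      fold (\<lambda>i cols. if w ! (i - 1) = W then place_W us cols i else place_S cols i)
           [2..<length w + 1]
           ((replicate (length us) [])[0 := [1]]))"

text \<open>Column 0 has ranks 0,1,...; column \<open>j > 0\<close> with top entry \<open>A+1\<close> has ranks
  \<open>\<alpha>, \<alpha>+1, ...\<close> where \<open>\<alpha>\<close> is the rank of \<open>A\<close>.\<close>
function entry_rank :: "nat list list \<Rightarrow> nat \<Rightarrow> nat" where
  "entry_rank cols e =
     (let j = (SOME j. j < length cols \<and> e \<in> set (cols ! j));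
          r = (LEAST r. r < length (cols ! j) \<and> cols ! j ! r = e)
      in if e = 0 \<or> j = 0 \<or> \<not> hd (cols ! j) \<le> e then r
         else entry_rank cols (hd (cols ! j) - 1) + r)"
  by auto
termination by (relation "measure snd") auto

text \<open>Depth labeling sequence: the ranks of the first row.\<close>
definition depth_seq :: "letter list \<Rightarrow> nat list" where
  "depth_seq w = (let cols = filling w in
     map (\<lambda>j. if j = 0 then 0 else entry_rank cols (hd (cols ! j) - 1)) [0..<length cols])"

definition depth :: "letter list \<Rightarrow> nat" where
  "depth w = sum_list (depth_seq w)"

definition aK :: "nat \<Rightarrow> nat list \<Rightarrow> nat list set" where
  "aK a k = {a # js | js. mset js = mset k}"

definition dyck_paths_aK :: "nat \<Rightarrow> nat list \<Rightarrow> letter list set" where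
  "dyck_paths_aK a k = (\<Union>u\<in>aK a k. dyck_paths u)"

end

theory Submission
  imports Defs "HOL-Library.Sublist"
begin

text \<open>A \<open>u\<close>-Dyck path is the preorder word of a plane tree in which a node labelled \<open>u\<close> has
  \<open>u + 1\<close> ordered slots, each empty or holding a subtree: the node contributes the letter \<open>S\<^sup>u\<close>,
  followed by the words of its slots separated by \<open>u\<close> letters \<open>W\<close>. Splitting a path at its first
  descent below a given level shows that this is a bijection from trees with preorder label
  sequence \<open>u\<close> onto \<open>\<D>\<^sub>u\<close>.

  A subtree in slot \<open>i\<close> of a node labelled \<open>u\<close> starts \<open>u - i\<close> ranks above that node, and the
  filling algorithm starts its column with the successor of the entry in row \<open>i\<close> of the node's
  column, so that its ranks start \<open>i\<close> above those of the node. Hence the area and the depth are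
  the sums over all nodes of the weights \<open>u - i\<close>, resp. \<open>i\<close>, of the slots on the way to the root.
  Reversing the order of the slots at every node exchanges these weights, so it swaps area and
  depth; it keeps the root label and permutes the other labels, so it maps \<open>\<D>\<^bsub>\<^sup>a\<K>\<^esub>\<close>
  onto itself.\<close>

definition overwrite :: "'a list \<Rightarrow> nat \<Rightarrow> 'a list \<Rightarrow> 'a list" where
  "overwrite xs k ys = take k xs @ ys @ drop (k + length ys) xs"

lemma length_overwrite [simp]: "k + length ys \<le> length xs \<Longrightarrow> length (overwrite xs k ys) = length xs"
  by (simp add: overwrite_def)

lemma nth_overwrite:
  "k + length ys \<le> length xs \<Longrightarrow> j < length xs \<Longrightarrow>
   overwrite xs k ys ! j = (if k \<le> j \<and> j < k + length ys then ys ! (j - k) else xs ! j)"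
  by (auto simp: overwrite_def nth_append min_def)

lemma set_overwrite: "set (overwrite xs k ys) \<subseteq> set xs \<union> set ys"
  by (auto simp: overwrite_def dest: in_set_takeD in_set_dropD)

lemma overwrite_Nil [simp]: "k \<le> length xs \<Longrightarrow> overwrite xs k [] = xs"
  by (simp add: overwrite_def)

lemma overwrite_all: "length ys = length xs \<Longrightarrow> overwrite xs 0 ys = ys"
  by (simp add: overwrite_def)

lemma overwrite_append:
  "k + length ys \<le> length xs \<Longrightarrow> j = k + length ys \<Longrightarrow>
   overwrite (overwrite xs k ys) j zs = overwrite xs k (ys @ zs)"
  by (simp add: overwrite_def ac_simps)

lemma overwrite_Cons: "k < length xs \<Longrightarrow> overwrite xs k (y # ys) = overwrite (xs[k := y]) (Suc k) ys"
  by (simp add: overwrite_def take_update_swap take_Suc_conv_app_nth list_update_append)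

lemma overwrite_list_update:
  "j < k \<Longrightarrow> j < length xs \<Longrightarrow> (overwrite xs k ys)[j := y] = overwrite (xs[j := y]) k ys"
  by (simp add: overwrite_def take_update_swap list_update_append1)

lemma prefix_drop_nth:
  assumes "prefix xs (drop k ys)" "i < length xs"
  shows "ys ! (k + i) = xs ! i"
proof -
  obtain r where r: "drop k ys = xs @ r" using assms(1) by (auto simp: prefix_def)
  then have "drop k ys ! i = xs ! i" and "i < length ys - k"
    using assms(2) by (simp_all add: nth_append flip: length_drop)
  then show ?thesis by simp
qed

lemma prefix_drop_length: "prefix xs (drop k ys) \<Longrightarrow> k \<le> length ys \<Longrightarrow> k + length xs \<le> length ys"
  using prefix_length_le[of xs "drop k ys"] by simp

lemma prefix_drop_appendD:
  assumes "prefix (xs @ ys) (drop k zs)"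
  shows "prefix xs (drop k zs)" "prefix ys (drop (k + length xs) zs)"
proof -
  obtain r where r: "drop k zs = xs @ ys @ r" using assms by (auto simp: prefix_def)
  have "drop (k + length xs) zs = drop (length xs) (drop k zs)" by (simp add: add.commute)
  with r have "drop (k + length xs) zs = ys @ r" by simp
  with r show "prefix xs (drop k zs)" "prefix ys (drop (k + length xs) zs)" by (auto simp: prefix_def)
qed

lemma prefix_drop_ConsD:
  assumes "prefix (x # xs) (drop k zs)"
  shows "k < length zs" "zs ! k = x" "prefix xs (drop (Suc k) zs)"
proof -
  have "drop k zs \<noteq> []" using assms by (auto simp: prefix_def)
  then show "k < length zs" by simp
  show "zs ! k = x" "prefix xs (drop (Suc k) zs)"
    using prefix_drop_nth[OF assms, of 0] prefix_drop_appendD[of "[x]" xs k zs] assms by simp_all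
qed

lemma distinct_concat_unique_index:
  "distinct (concat F) \<Longrightarrow> i < length F \<Longrightarrow> j < length F \<Longrightarrow> e \<in> set (F ! i) \<Longrightarrow> e \<in> set (F ! j)
   \<Longrightarrow> i = j"
proof (induction F arbitrary: i j)
  case (Cons col F)
  have disj: "e \<notin> set (F ! n)" if "e \<in> set col" "n < length F" for n
    using Cons.prems(1) that nth_mem by fastforce
  show ?case
  proof (cases i)
    case 0
    then show ?thesis using Cons.prems disj by (cases j) auto
  next
    case (Suc n)
    then show ?thesis using Cons.prems disj Cons.IH[of n "j - 1"] by (cases j) auto
  qed
qed simp

section \<open>Plane trees and their words\<close>

datatype tree = Node nat "tree option list"

fun word :: "tree \<Rightarrow> letter list"
  and slot_word :: "tree option \<Rightarrow> letter list"
  and slots_word :: "tree option list \<Rightarrow> letter list" where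
  "word (Node u []) = [S u]"
| "word (Node u (c # cs)) = S u # slot_word c @ slots_word cs"
| "slot_word None = []"
| "slot_word (Some t) = word t"
| "slots_word [] = []"
| "slots_word (c # cs) = W # slot_word c @ slots_word cs"

fun wf_tree :: "tree \<Rightarrow> bool"
  and wf_slot :: "tree option \<Rightarrow> bool"
  and wf_slots :: "tree option list \<Rightarrow> bool" where
  "wf_tree (Node u cs) \<longleftrightarrow> 0 < u \<and> length cs = Suc u \<and> wf_slots cs"
| "wf_slot None \<longleftrightarrow> True"
| "wf_slot (Some t) \<longleftrightarrow> wf_tree t"
| "wf_slots [] \<longleftrightarrow> True"
| "wf_slots (c # cs) \<longleftrightarrow> wf_slot c \<and> wf_slots cs"

fun labels :: "tree \<Rightarrow> nat list"
  and slot_labels :: "tree option \<Rightarrow> nat list"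
  and slots_labels :: "tree option list \<Rightarrow> nat list" where
  "labels (Node u cs) = u # slots_labels cs"
| "slot_labels None = []"
| "slot_labels (Some t) = labels t"
| "slots_labels [] = []"
| "slots_labels (c # cs) = slot_labels c @ slots_labels cs"

fun mirror :: "tree \<Rightarrow> tree" where
  "mirror (Node u cs) = Node u (rev (map (map_option mirror) cs))"

lemma word_not_Nil [simp]: "word t \<noteq> []"
  by (cases t rule: word.cases) auto

definition height :: "letter list \<Rightarrow> int" where
  "height w = sum_list (map letter_step w)"

lemma height_simps [simp]:
  "height [] = 0" "height (x # w) = letter_step x + height w" "height (v @ w) = height v + height w"
  by (auto simp: height_def)

lemma start_rank_eq_height: "start_rank w i = height (take i w)"
  by (simp add: start_rank_def height_def)

lemma ups_simps [simp]:
  "ups [] = []" "ups (S n # w) = n # ups w" "ups (W # w) = ups w" "ups (v @ w) = ups v @ ups w"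
  by (auto simp: ups_def)

lemma set_ups: "set (ups w) = {n. S n \<in> set w}"
proof (induction w)
  case (Cons x w)
  then show ?case by (cases x) auto
qed simp

lemma height_conv_ups: "height w = int (sum_list (ups w)) - int (length (filter (\<lambda>x. x = W) w))"
proof (induction w)
  case (Cons x w)
  then show ?case by (cases x) auto
qed simp

lemma height_word:
  "wf_tree t \<Longrightarrow> height (word t) = 0 \<and> (\<forall>i. 0 \<le> height (take i (word t)))"
  "wf_slot c \<Longrightarrow> height (slot_word c) = 0 \<and> (\<forall>i. 0 \<le> height (take i (slot_word c)))"
  "wf_slots cs \<Longrightarrow> height (slots_word cs) = - int (length cs)
     \<and> (\<forall>i. - int (length cs) \<le> height (take i (slots_word cs)))"
proof (induction t and c and cs rule: word_slot_word_slots_word.induct)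
  case (2 u c cs)
  have "0 \<le> height (take i (word (Node u (c # cs))))" for i
  proof (cases i)
    case (Suc j)
    have "0 \<le> height (take j (slot_word c))"
      and "- int u \<le> height (take (j - length (slot_word c)) (slots_word cs))"
      using 2 by auto
    then show ?thesis using Suc by simp
  qed simp
  then show ?case using 2 by simp
next
  case (6 c cs)
  have "- int (length (c # cs)) \<le> height (take i (slots_word (c # cs)))" for i
  proof (cases i)
    case (Suc j)
    have "0 \<le> height (take j (slot_word c))"
      and "- int (length cs) \<le> height (take (j - length (slot_word c)) (slots_word cs))"
      using 6 by auto
    then show ?thesis using Suc by simp
  qed simp
  then show ?case using 6 by simp
qed auto

lemma ups_word:
  "ups (word t) = labels t" "ups (slot_word c) = slot_labels c" "ups (slots_word cs) = slots_labels cs"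
  by (induction t and c and cs rule: word_slot_word_slots_word.induct) auto

lemma count_W_word:
  "wf_tree t \<Longrightarrow> length (filter (\<lambda>x. x = W) (word t)) = sum_list (labels t)"
  "wf_slot c \<Longrightarrow> length (filter (\<lambda>x. x = W) (slot_word c)) = sum_list (slot_labels c)"
  "wf_slots cs \<Longrightarrow> length (filter (\<lambda>x. x = W) (slots_word cs)) = length cs + sum_list (slots_labels cs)"
  by (induction t and c and cs rule: word_slot_word_slots_word.induct) auto

lemma word_in_dyck_paths: "wf_tree t \<Longrightarrow> word t \<in> dyck_paths (labels t)"
  using height_word(1) count_W_word(1) by (simp add: dyck_paths_def ups_word start_rank_eq_height)

lemma first_descent:
  "height w < - int b \<Longrightarrow>
   \<exists>v r. w = v @ W # r \<and> height v = - int b \<and> (\<forall>i. - int b \<le> height (take i v))"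
proof (induction w arbitrary: b)
  case (Cons x w)
  show ?case
  proof (cases x)
    case (S m)
    with Cons.prems obtain v r where "w = v @ W # r" "height v = - int (b + m)"
      and v: "\<forall>i. - int (b + m) \<le> height (take i v)"
      using Cons.IH[of "b + m"] by auto
    moreover have "- int b \<le> height (take i (S m # v))" for i
      using v[rule_format, of "i - 1"] S by (cases i) auto
    ultimately have "x # w = (S m # v) @ W # r \<and> height (S m # v) = - int b
        \<and> (\<forall>i. - int b \<le> height (take i (S m # v)))"
      using S by simp
    then show ?thesis by blast
  next
    case W
    show ?thesis
    proof (cases b)
      case 0
      show ?thesis
      proof (intro exI conjI)
        show "x # w = [] @ W # w" using W by simp
      qed (use 0 in simp_all)
    next
      case (Suc b')
      with Cons.prems W obtain v r where "w = v @ W # r" "height v = - int b'"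
        and v: "\<forall>i. - int b' \<le> height (take i v)"
        using Cons.IH[of b'] by auto
      moreover have "- int b \<le> height (take i (W # v))" for i
        using v[rule_format, of "i - 1"] Suc by (cases i) auto
      ultimately have "x # w = (W # v) @ W # r \<and> height (W # v) = - int b
          \<and> (\<forall>i. - int b \<le> height (take i (W # v)))"
        using W Suc by simp
      then show ?thesis by blast
    qed
  qed
qed simp

lemma first_descent_unique:
  assumes "v @ W # r = v' @ W # r'" "height v = 0" "height v' = 0"
    "\<forall>i. 0 \<le> height (take i v)" "\<forall>i. 0 \<le> height (take i v')"
  shows "v = v' \<and> r = r'"
proof -
  have False if "v @ W # r = v' @ W # r'" "height v = 0" "\<forall>i. 0 \<le> height (take i v')"
    "length v < length v'" for v v' r r'
  proof -
    have "take (Suc (length v)) v' = v @ [W]"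
      using arg_cong[OF that(1), of "take (Suc (length v))"] that(4) by simp
    then have "height (take (Suc (length v)) v') = -1" using that(2) by simp
    then show False using that(3)[rule_format, of "Suc (length v)"] by simp
  qed
  then have "length v = length v'"
    using assms by (metis linorder_neqE_nat)
  then show ?thesis using assms(1) by simp
qed

lemma slots_word_decomposition:
  "S 0 \<notin> set w \<Longrightarrow> (\<forall>i. - int n \<le> height (take i w)) \<Longrightarrow> height w = - int n \<Longrightarrow>
   \<exists>c cs. wf_slot c \<and> wf_slots cs \<and> length cs = n \<and> w = slot_word c @ slots_word cs"
proof (induction "length w" arbitrary: w n rule: less_induct)
  case less
  show ?case
  proof (cases "n = 0")
    case True
    show ?thesis
    proof (cases w)
      case Nil
      then show ?thesis using True by (intro exI[of _ None] exI[of _ "[]"]) auto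
    next
      case (Cons x w')
      have "0 \<le> height (take 1 w)" using less.prems True by auto
      with Cons less.prems(1) obtain u where x: "x = S u" and "0 < u"
        by (cases x) auto
      have "- int u \<le> height (take i w')" for i
        using less.prems(2)[rule_format, of "Suc i"] True Cons x by simp
      moreover have "height w' = - int u" using less.prems True Cons x by auto
      ultimately obtain c cs where "wf_slot c" "wf_slots cs" "length cs = u" "w' = slot_word c @ slots_word cs"
        using less.hyps[of w' u] less.prems(1) Cons by auto
      then show ?thesis using x Cons \<open>0 < u\<close> True
        by (intro exI[of _ "Some (Node u (c # cs))"] exI[of _ "[]"]) auto
    qed
  next
    case False
    then obtain v r where w: "w = v @ W # r" and v: "height v = 0" "\<forall>i. 0 \<le> height (take i v)"
      using first_descent[of w 0] less.prems(3) by auto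
    obtain c0 cs0 where "wf_slot c0" "wf_slots cs0" "length cs0 = 0" "v = slot_word c0 @ slots_word cs0"
      using less.hyps[of v 0] less.prems(1) v w by auto
    moreover
    have "- int (n - 1) \<le> height (take i r)" for i
      using less.prems(2)[rule_format, of "length v + 1 + i"] w v False by simp
    then obtain c1 cs1 where "wf_slot c1" "wf_slots cs1" "length cs1 = n - 1" "r = slot_word c1 @ slots_word cs1"
      using less.hyps[of r "n - 1"] less.prems w v False by auto
    ultimately show ?thesis using w False
      by (intro exI[of _ c0] exI[of _ "c1 # cs1"]) auto
  qed
qed

lemma dyck_path_is_word:
  assumes "w \<in> dyck_paths u" "u \<noteq> []" "\<forall>x\<in>set u. 0 < x"
  shows "\<exists>t. wf_tree t \<and> word t = w"
proof -
  have u: "ups w = u" and nonneg: "\<forall>i<length w. 0 \<le> height (take i w)" and "height w = 0"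
    using assms(1) height_conv_ups[of w] by (auto simp: dyck_paths_def start_rank_eq_height)
  have "- int 0 \<le> height (take i w)" for i
  proof (cases "i < length w")
    case False
    then show ?thesis using \<open>height w = 0\<close> by simp
  qed (use nonneg in simp)
  moreover have "S 0 \<notin> set w"
    using u assms(3) set_ups[of w] by auto
  ultimately obtain c where "wf_slot c" "w = slot_word c"
    using slots_word_decomposition[of w 0] \<open>height w = 0\<close> by auto
  moreover have "w \<noteq> []" using u assms(2) by auto
  ultimately show ?thesis by (cases c) auto
qed

lemma slot_word_append_inj:
  assumes "wf_slot c" "wf_slot c'" "length cs = length cs'"
    and "slot_word c @ slots_word cs = slot_word c' @ slots_word cs'"
  shows "slot_word c = slot_word c'" "slots_word cs = slots_word cs'"
proof -
  have "slot_word c = slot_word c' \<and> slots_word cs = slots_word cs'"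
  proof (cases cs)
    case (Cons d ds)
    with assms(3) obtain d' ds' where "cs' = d' # ds'" by (cases cs') auto
    then show ?thesis
      using first_descent_unique[of "slot_word c" _ "slot_word c'"] height_word(2) assms Cons by simp
  qed (use assms in simp)
  then show "slot_word c = slot_word c'" "slots_word cs = slots_word cs'" by simp_all
qed

lemma word_inj:
  "wf_tree t \<Longrightarrow> wf_tree t' \<Longrightarrow> word t = word t' \<Longrightarrow> t = t'"
  "wf_slot c \<Longrightarrow> wf_slot c' \<Longrightarrow> slot_word c = slot_word c' \<Longrightarrow> c = c'"
  "wf_slots cs \<Longrightarrow> wf_slots cs' \<Longrightarrow> length cs = length cs' \<Longrightarrow> slots_word cs = slots_word cs' \<Longrightarrow> cs = cs'"
proof (induction t and c and cs arbitrary: t' and c' and cs' rule: word_slot_word_slots_word.induct)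
  case (2 u c cs)
  from "2.prems" obtain c' cs' where t': "t' = Node u (c' # cs')"
    by (cases t' rule: word.cases) auto
  with "2.prems" have "wf_slot c" "wf_slot c'" "wf_slots cs" "wf_slots cs'" "length cs = length cs'"
    and eq: "slot_word c @ slots_word cs = slot_word c' @ slots_word cs'" by auto
  with slot_word_append_inj[OF _ _ _ eq] "2.IH" show ?case using t' by blast
next
  case (3 c')
  then show ?case by (cases c') (auto simp: eq_commute[of "[]" "word _"])
next
  case (4 t)
  then show ?case by (cases c') auto
next
  case (6 c cs)
  from "6.prems" obtain c' cs'' where cs': "cs' = c' # cs''" by (cases cs') auto
  with "6.prems" have "wf_slot c" "wf_slot c'" "wf_slots cs" "wf_slots cs''" "length cs = length cs''"
    and eq: "slot_word c @ slots_word cs = slot_word c' @ slots_word cs''" by auto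
  with slot_word_append_inj[OF _ _ _ eq] "6.IH" show ?case using cs' by blast
qed auto

section \<open>Area\<close>

lemma area_Nil [simp]: "area [] = 0"
  by (simp add: area_def)

lemma area_Cons: "area (x # w) = area w + letter_step x * int (length (ups w))"
proof -
  have ups: "(\<Sum>i<length w. if w ! i = W then 0 else 1) = int (length (ups w))"
  proof (induction w)
    case (Cons y w)
    then show ?case by (cases y) (simp_all add: sum.lessThan_Suc_shift del: sum.lessThan_Suc)
  qed simp
  have "area (x # w) = (\<Sum>i<length w. if w ! i = W then 0 else letter_step x + start_rank w i)"
    by (simp add: area_def start_rank_eq_height sum.lessThan_Suc_shift del: sum.lessThan_Suc
        cong: if_cong)
  also have "\<dots> = (\<Sum>i<length w. (if w ! i = W then 0 else start_rank w i)
                        + letter_step x * (if w ! i = W then 0 else 1))"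
    by (rule sum.cong) auto
  finally show ?thesis
    by (simp only: sum.distrib sum_distrib_left[symmetric] ups area_def start_rank_eq_height)
qed

lemma area_append: "area (v @ w) = area v + area w + height v * int (length (ups w))"
  by (induction v) (simp_all add: area_Cons algebra_simps)

text \<open>Slot \<open>i\<close> of a node labelled \<open>u\<close> has weight \<open>f u i\<close>, paid once by every node of the
  subtree in that slot. The area has \<open>f u i = u - i\<close>, the rank at which slot \<open>i\<close> starts;
  the depth has \<open>f u i = i\<close>, the row of slot \<open>i\<close> in the node's column.\<close>

fun tree_weight :: "(nat \<Rightarrow> nat \<Rightarrow> nat) \<Rightarrow> tree \<Rightarrow> nat"
  and slot_weight :: "(nat \<Rightarrow> nat \<Rightarrow> nat) \<Rightarrow> nat \<Rightarrow> tree option \<Rightarrow> nat"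
  and slots_weight :: "(nat \<Rightarrow> nat \<Rightarrow> nat) \<Rightarrow> nat \<Rightarrow> nat \<Rightarrow> tree option list \<Rightarrow> nat" where
  "tree_weight f (Node u cs) = slots_weight f u 0 cs"
| "slot_weight f h None = 0"
| "slot_weight f h (Some t) = h * length (labels t) + tree_weight f t"
| "slots_weight f u i [] = 0"
| "slots_weight f u i (c # cs) = slot_weight f (f u i) c + slots_weight f u (Suc i) cs"

lemma slots_weight_eq_sum:
  "slots_weight f u i cs = (\<Sum>j<length cs. slot_weight f (f u (i + j)) (cs ! j))"
proof (induction cs arbitrary: i)
  case (Cons c cs)
  then show ?case by (simp add: sum.lessThan_Suc_shift del: sum.lessThan_Suc)
qed simp

lemma slot_weight_shift: "slot_weight f (h + b) c = slot_weight f h c + b * length (slot_labels c)"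
  by (cases c) (simp_all add: algebra_simps)

lemma area_word:
  "wf_tree t \<Longrightarrow> area (word t) = int (tree_weight (\<lambda>u i. u - i) t)"
  "wf_slot c \<Longrightarrow> area (slot_word c) + int h * int (length (slot_labels c))
     = int (slot_weight (\<lambda>u i. u - i) h c)"
  "wf_slots cs \<Longrightarrow> i + length cs = Suc u \<Longrightarrow>
     area (slots_word cs) + (int (u - i) + 1) * int (length (slots_labels cs))
     = int (slots_weight (\<lambda>u i. u - i) u i cs)"
proof (induction t and c and cs arbitrary: and h and i u rule: word_slot_word_slots_word.induct)
  case (1 u)
  then show ?case by simp
next
  case (2 u c cs)
  then have "area (slot_word c) + int u * int (length (slot_labels c)) = int (slot_weight (\<lambda>u i. u - i) u c)"
    and "area (slots_word cs) + int u * int (length (slots_labels cs)) = int (slots_weight (\<lambda>u i. u - i) u 1 cs)"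
    using "2.IH"(2)[of 1 u] by (auto simp: of_nat_diff)
  then show ?case
    using height_word(2) "2.prems" by (simp add: area_Cons area_append ups_word algebra_simps)
next
  case (6 c cs)
  have "area (slots_word cs) + int (u - i) * int (length (slots_labels cs))
    = int (slots_weight (\<lambda>u i. u - i) u (Suc i) cs)"
  proof (cases cs)
    case Nil
    then show ?thesis by simp
  next
    case Cons
    then show ?thesis using "6.IH"(2)[of "Suc i" u] "6.prems" by (simp add: of_nat_diff)
  qed
  moreover have "area (slot_word c) + int (u - i) * int (length (slot_labels c))
    = int (slot_weight (\<lambda>u i. u - i) (u - i) c)"
    using "6.IH"(1)[of "u - i"] "6.prems"(1) by simp
  ultimately show ?case
    using height_word(2) "6.prems" by (simp add: area_Cons area_append ups_word algebra_simps)
qed (simp_all add: ups_word)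

section \<open>Mirror image\<close>

lemma wf_slots_iff: "wf_slots cs \<longleftrightarrow> (\<forall>c\<in>set cs. pred_option wf_tree c)"
proof (induction cs)
  case (Cons c cs)
  then show ?case by (cases c) auto
qed simp

lemma slots_labels_eq_concat: "slots_labels cs = concat (map slot_labels cs)"
  by (induction cs) auto

lemma mirror_mirror [simp]: "mirror (mirror t) = t"
  by (induction t) (auto simp: rev_map option.map_comp intro!: map_idI option.map_ident_strong)

lemma wf_mirror [simp]: "wf_tree (mirror t) \<longleftrightarrow> wf_tree t"
  by (induction t) (auto simp: wf_slots_iff option.pred_map option.pred_set)

lemma mset_labels_mirror: "mset (labels (mirror t)) = mset (labels t)"
proof (induction t)
  case (Node u cs)
  have "mset (slot_labels (map_option mirror c)) = mset (slot_labels c)" if "c \<in> set cs" for c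
    using Node that by (cases c) auto
  then show ?case
    by (simp add: slots_labels_eq_concat mset_concat rev_map[symmetric] sum_list_rev
        cong: map_cong)
qed

lemma length_labels_mirror [simp]: "length (labels (mirror t)) = length (labels t)"
  by (metis mset_labels_mirror size_mset)

lemma tree_weight_mirror:
  assumes "wf_tree t" and "\<forall>u i. i \<le> u \<longrightarrow> g u i = f u (u - i)"
  shows "tree_weight g (mirror t) = tree_weight f t"
  using assms(1)
proof (induction t)
  case (Node u cs)
  have len: "length cs = Suc u" using Node.prems by simp
  have IH: "slot_weight g h (map_option mirror c) = slot_weight f h c" if "c \<in> set cs" for h c
    using Node that by (cases c) (auto simp: wf_slots_iff)
  let ?F = "\<lambda>j. slot_weight g (g u (u - j)) (map_option mirror (cs ! j))"
  have "tree_weight g (mirror (Node u cs))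
      = (\<Sum>j<Suc u. slot_weight g (g u j) (map_option mirror (cs ! (u - j))))"
    by (simp add: slots_weight_eq_sum len rev_nth del: sum.lessThan_Suc)
  also have "\<dots> = (\<Sum>j<Suc u. ?F (u - j))"
    by (intro sum.cong) auto
  also have "\<dots> = (\<Sum>j<Suc u. ?F j)"
    using sum.nat_diff_reindex[of ?F "Suc u"] by simp
  also have "\<dots> = (\<Sum>j<Suc u. slot_weight f (f u j) (cs ! j))"
    using assms(2) len by (intro sum.cong) (auto simp: IH)
  also have "\<dots> = tree_weight f (Node u cs)"
    by (simp add: slots_weight_eq_sum len del: sum.lessThan_Suc)
  finally show ?case .
qed

section \<open>The filling algorithm on the word of a tree\<close>

text \<open>The letters of \<open>word t\<close> are numbered \<open>p + 1, p + 2, \<dots>\<close>. The column of a node lists the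
  number \<open>q\<close> of its letter \<open>S\<close>, followed by the numbers of the letters \<open>W\<close> that separate its
  slots.\<close>

fun column_entries :: "nat \<Rightarrow> tree option list \<Rightarrow> nat list" where
  "column_entries q [] = []"
| "column_entries q (c # cs) = q # column_entries (q + length (slot_word c) + 1) cs"

fun tableau :: "tree \<Rightarrow> nat \<Rightarrow> nat list list"
  and slot_tableau :: "tree option \<Rightarrow> nat \<Rightarrow> nat list list"
  and slots_tableau :: "tree option list \<Rightarrow> nat \<Rightarrow> nat list list" where
  "tableau (Node u cs) p = column_entries (Suc p) cs # slots_tableau cs (Suc p)"
| "slot_tableau None q = []"
| "slot_tableau (Some t) q = tableau t q"
| "slots_tableau [] q = []"
| "slots_tableau (c # cs) q = slot_tableau c q @ slots_tableau cs (q + length (slot_word c) + 1)"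

lemma length_column_entries [simp]: "length (column_entries q cs) = length cs"
  by (induction cs arbitrary: q) auto

lemma length_tableau:
  "length (tableau t p) = length (labels t)"
  "length (slot_tableau c q) = length (slot_labels c)"
  "length (slots_tableau cs q) = length (slots_labels cs)"
  by (induction t p and c q and cs q rule: tableau_slot_tableau_slots_tableau.induct) auto

lemma length_tableau_nth:
  "wf_tree t \<Longrightarrow> i < length (labels t) \<Longrightarrow> length (tableau t p ! i) = Suc (labels t ! i)"
  "wf_slot c \<Longrightarrow> i < length (slot_labels c) \<Longrightarrow> length (slot_tableau c q ! i) = Suc (slot_labels c ! i)"
  "wf_slots cs \<Longrightarrow> i < length (slots_labels cs) \<Longrightarrow>
     length (slots_tableau cs q ! i) = Suc (slots_labels cs ! i)"
proof (induction t p and c q and cs q arbitrary: i and i and i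
    rule: tableau_slot_tableau_slots_tableau.induct)
  case (1 u cs p)
  then show ?case by (cases i) auto
next
  case (5 c cs q)
  then show ?case by (cases "i < length (slot_labels c)") (auto simp: nth_append length_tableau)
qed auto

lemma mset_tableau:
  "wf_tree t \<Longrightarrow> mset (concat (tableau t p)) = mset [Suc p..<Suc p + length (word t)]"
  "wf_slot c \<Longrightarrow> mset (concat (slot_tableau c q)) = mset [Suc q..<Suc q + length (slot_word c)]"
  "wf_slots cs \<Longrightarrow> mset (column_entries q cs @ concat (slots_tableau cs q))
     = mset [q..<q + length (slots_word cs)]"
proof (induction t p and c q and cs q rule: tableau_slot_tableau_slots_tableau.induct)
  case (1 u cs p)
  then obtain c cs' where "cs = c # cs'" by (cases cs) auto
  with 1 show ?case by simp
next
  case (5 c cs q)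
  let ?q = "q + length (slot_word c) + 1"
  have "[q..<?q + length (slots_word cs)] = [q..<?q] @ [?q..<?q + length (slots_word cs)]"
    by (rule upt_add_eq_append) simp
  moreover have "[q..<?q] = q # [Suc q..<Suc q + length (slot_word c)]"
    by (subst upt_conv_Cons) simp_all
  ultimately show ?case using 5 by (simp add: add.assoc del: upt_Suc)
qed auto

lemma distinct_tableau: "wf_tree t \<Longrightarrow> distinct (concat (tableau t p))"
  by (metis mset_tableau(1) mset_eq_imp_distinct_iff distinct_upt)

lemma slot_tableau_entries:
  assumes "wf_slot c"
  shows "set (concat (slot_tableau c q)) = {Suc q..q + length (slot_word c)}"
  using mset_tableau(2)[OF assms] by (metis atLeastLessThanSuc_atLeastAtMost add_Suc set_upt mset_eq_setD)

fun fill_run :: "nat list \<Rightarrow> nat list list \<Rightarrow> nat \<Rightarrow> letter list \<Rightarrow> nat list list" where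
  "fill_run us cols p [] = cols"
| "fill_run us cols p (x # w) =
     fill_run us (if x = W then place_W us cols (Suc p) else place_S cols (Suc p)) (Suc p) w"

lemma fill_run_append: "fill_run us cols p (v @ w) = fill_run us (fill_run us cols p v) (p + length v) w"
  by (induction v arbitrary: cols p) auto

lemma fold_eq_fill_run:
  "p \<le> length w \<Longrightarrow>
   fold (\<lambda>i cols. if w ! (i - 1) = W then place_W us cols i else place_S cols i) [Suc p..<Suc (length w)] cols
   = fill_run us cols p (drop p w)"
proof (induction "length w - p" arbitrary: p cols)
  case (Suc n)
  then have "[Suc p..<Suc (length w)] = Suc p # [Suc (Suc p)..<Suc (length w)]"
    and "drop p w = w ! p # drop (Suc p) w"
    by (simp_all add: upt_conv_Cons Cons_nth_drop_Suc del: upt_Suc)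
  then show ?case using Suc by simp
qed simp

lemma place_S_eq:
  assumes "\<forall>j<k. cols ! j \<noteq> []" "k < length cols" "cols ! k = []"
  shows "place_S cols i = cols[k := [i]]"
proof -
  have "(LEAST j. j < length cols \<and> cols ! j = []) = k"
    by (rule Least_equality) (use assms in \<open>auto simp: not_less[symmetric]\<close>)
  then show ?thesis by (simp add: place_S_def)
qed

lemma filling_eq_fill_run:
  assumes "w = S u # v"
  shows "filling w = fill_run (ups w) (replicate (length (ups w)) []) 0 w"
proof -
  let ?m = "length (ups w)"
  have "(replicate ?m [])[0 := [1]] = place_S (replicate ?m []) 1"
    using place_S_eq[of 0 "replicate ?m []" 1] assms by simp
  moreover have "filling w = fold (\<lambda>i cols. if w ! (i - 1) = W then place_W (ups w) cols i else place_S cols i)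
     [Suc 1..<Suc (length w)] ((replicate ?m [])[0 := [1]])"
    by (simp add: filling_def Let_def numeral_2_eq_2 del: upt_Suc)
  ultimately show ?thesis
    using fold_eq_fill_run[of 1 w] assms by simp
qed

text \<open>In \<open>open_column us cols k0 k n\<close>, column \<open>k0\<close> is the one that receives the next \<open>n\<close>
  letters \<open>W\<close>.\<close>

definition filled :: "nat list \<Rightarrow> nat list list \<Rightarrow> nat \<Rightarrow> nat \<Rightarrow> bool" where
  "filled us cols k p \<longleftrightarrow> length cols = length us \<and> k \<le> length cols
     \<and> (\<forall>j<length cols. cols ! j = [] \<longleftrightarrow> k \<le> j) \<and> (\<forall>col\<in>set cols. \<forall>e\<in>set col. e \<le> p)"

definition open_column :: "nat list \<Rightarrow> nat list list \<Rightarrow> nat \<Rightarrow> nat \<Rightarrow> nat \<Rightarrow> bool" where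
  "open_column us cols k0 k n \<longleftrightarrow> k0 < k \<and> (\<forall>j<k0. \<forall>e\<in>set (cols ! j). e < last (cols ! k0))
     \<and> (\<forall>j. k0 < j \<and> j < k \<longrightarrow> length (cols ! j) = Suc (us ! j)) \<and> length (cols ! k0) + n = Suc (us ! k0)"

lemma place_W_eq:
  assumes "filled us cols k p" "open_column us cols k0 k (Suc n)"
  shows "place_W us cols i = cols[k0 := cols ! k0 @ [i]]"
proof -
  let ?J = "active_cols us cols"
  from assms(1) have empty: "\<And>j. j < length cols \<Longrightarrow> cols ! j = [] \<longleftrightarrow> k \<le> j"
    and "k \<le> length cols" by (simp_all add: filled_def)
  from assms(2) have "k0 < k" and lt: "\<And>j e. j < k0 \<Longrightarrow> e \<in> set (cols ! j) \<Longrightarrow> e < last (cols ! k0)"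
    and full: "\<And>j. k0 < j \<Longrightarrow> j < k \<Longrightarrow> length (cols ! j) = Suc (us ! j)"
    and "length (cols ! k0) < Suc (us ! k0)"
    by (auto simp: open_column_def)
  have J: "j \<le> k0" if "j \<in> ?J" for j
  proof (rule ccontr)
    assume "\<not> j \<le> k0"
    moreover have "j < length cols" "cols ! j \<noteq> []" "length (cols ! j) < Suc (us ! j)"
      using that by (auto simp: active_cols_def)
    moreover from this have "j < k" using empty[of j] by simp
    ultimately show False using full[of j] by simp
  qed
  have last_lt: "last (cols ! j) < last (cols ! k0)" if "j < k0" for j
    using lt[OF that] empty[of j] that \<open>k0 < k\<close> \<open>k \<le> length cols\<close> by simp
  have "k0 \<in> ?J"
    using empty[of k0] \<open>k0 < k\<close> \<open>k \<le> length cols\<close> \<open>length (cols ! k0) < Suc (us ! k0)\<close>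
    by (simp add: active_cols_def)
  moreover have "last (cols ! j) \<le> last (cols ! k0)" if "j \<in> ?J" for j
    using J[OF that] last_lt[of j] by (cases "j = k0") auto
  moreover have "j = k0" if "j \<in> ?J" "\<forall>j'\<in>?J. last (cols ! j') \<le> last (cols ! j)" for j
  proof (rule ccontr)
    assume "j \<noteq> k0"
    with J[OF that(1)] have "last (cols ! j) < last (cols ! k0)" by (simp add: last_lt)
    moreover have "last (cols ! k0) \<le> last (cols ! j)" using that(2) \<open>k0 \<in> ?J\<close> by blast
    ultimately show False by simp
  qed
  ultimately have "(SOME j. j \<in> ?J \<and> (\<forall>j'\<in>?J. last (cols ! j') \<le> last (cols ! j))) = k0"
    by (intro some_equality) blast+
  then show ?thesis by (simp add: place_W_def Let_def)
qed

lemma filled_entry_le: "filled us cols k p \<Longrightarrow> j < length cols \<Longrightarrow> e \<in> set (cols ! j) \<Longrightarrow> e \<le> p"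
  unfolding filled_def by (meson nth_mem)

lemma filled_entries_update:
  assumes "\<forall>col\<in>set cols. \<forall>e\<in>set col. e \<le> p" "\<forall>e\<in>set col. e \<le> Suc p"
  shows "\<forall>col\<in>set (cols[j := col]). \<forall>e\<in>set col. e \<le> Suc p"
  using set_update_subset_insert[of cols j col] assms by fastforce

lemma filled_start_column:
  assumes "filled us cols k p" "k < length cols"
  shows "filled us (cols[k := [Suc p]]) (Suc k) (Suc p)"
  using assms filled_entries_update[of cols p "[Suc p]" k]
  unfolding filled_def by (auto simp: nth_list_update)

lemma filled_extend_column:
  assumes "filled us cols k p" "k0 < k"
  shows "filled us (cols[k0 := cols ! k0 @ [Suc p]]) k (Suc p)"
proof -
  have "k0 < length cols" using assms by (simp add: filled_def)
  then have "\<forall>e\<in>set (cols ! k0 @ [Suc p]). e \<le> Suc p"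
    using filled_entry_le[OF assms(1)] by (auto intro: le_SucI)
  then show ?thesis
    using assms filled_entries_update[of cols p "cols ! k0 @ [Suc p]" k0]
    unfolding filled_def by (auto simp: nth_list_update)
qed

lemma filled_overwrite_slot:
  assumes "filled us cols k p" "wf_slot c" "prefix (slot_labels c) (drop k us)"
  shows "filled us (overwrite cols k (slot_tableau c p)) (k + length (slot_labels c)) (p + length (slot_word c))"
proof -
  let ?T = "slot_tableau c p" and ?l = "length (slot_labels c)"
  from assms(1) have empty: "\<And>j. j < length cols \<Longrightarrow> cols ! j = [] \<longleftrightarrow> k \<le> j"
    and "length cols = length us" "k \<le> length cols"
    and entries: "\<forall>col\<in>set cols. \<forall>e\<in>set col. e \<le> p"
    by (simp_all add: filled_def)
  then have len: "k + length ?T \<le> length cols"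
    using prefix_drop_length[OF assms(3)] by (simp add: length_tableau)
  have "?T ! i \<noteq> []" if "i < ?l" for i
    using length_tableau_nth(2)[OF assms(2) that, of p] by auto
  then have "overwrite cols k ?T ! j = [] \<longleftrightarrow> k + ?l \<le> j" if "j < length cols" for j
    using that len empty[OF that] by (auto simp: nth_overwrite length_tableau)
  moreover have "\<forall>col\<in>set (overwrite cols k ?T). \<forall>e\<in>set col. e \<le> p + length (slot_word c)"
    using set_overwrite[of cols k ?T] entries slot_tableau_entries[OF assms(2), of p] by fastforce
  ultimately show ?thesis
    using len \<open>length cols = length us\<close> by (simp add: filled_def length_tableau)
qed

lemma open_column_start:
  assumes "filled us cols k p" "k < length cols"
  shows "open_column us (cols[k := [Suc p]]) k (Suc k) (us ! k)"
proof -
  have "e < Suc p" if "j < k" "e \<in> set (cols ! j)" for j e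
    using filled_entry_le[OF assms(1) _ that(2)] that(1) assms(2) by simp
  then show ?thesis using assms(2) by (simp add: open_column_def)
qed

lemma open_column_extend:
  assumes "filled us cols k p" "open_column us cols k0 k (Suc n)"
  shows "open_column us (cols[k0 := cols ! k0 @ [Suc p]]) k0 k n"
proof -
  have "k0 < length cols" using assms by (simp add: filled_def open_column_def)
  moreover have "e < Suc p" if "j < k0" "e \<in> set (cols ! j)" for j e
    using filled_entry_le[OF assms(1) _ that(2)] that(1) calculation by simp
  ultimately show ?thesis using assms(2) by (simp add: open_column_def)
qed

lemma open_column_overwrite_slot:
  assumes "open_column us cols k0 k n" "wf_slot c" "prefix (slot_labels c) (drop k us)"
    "k + length (slot_labels c) \<le> length cols"
  shows "open_column us (overwrite cols k (slot_tableau c p)) k0 (k + length (slot_labels c)) n"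
proof -
  have "length (slot_tableau c p ! (j - k)) = Suc (us ! j)"
    if "k \<le> j" "j < k + length (slot_labels c)" for j
    using that length_tableau_nth(2)[OF assms(2)] prefix_drop_nth[OF assms(3), of "j - k"] by simp
  then show ?thesis
    using assms(1,4) by (auto simp: open_column_def nth_overwrite length_tableau)
qed

lemma fill_run_slot_slots:
  assumes run_slot: "\<And>cols k p. filled us cols k p \<Longrightarrow> prefix (slot_labels c) (drop k us) \<Longrightarrow>
      fill_run us cols p (slot_word c) = overwrite cols k (slot_tableau c p)"
    and run_slots: "\<And>cols k k0 q. filled us cols k q \<Longrightarrow> prefix (slots_labels cs) (drop k us) \<Longrightarrow>
      open_column us cols k0 k (length cs) \<Longrightarrow> fill_run us cols q (slots_word cs)
        = (overwrite cols k (slots_tableau cs (Suc q)))[k0 := cols ! k0 @ column_entries (Suc q) cs]"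
    and "wf_slot c" "filled us cols k p" "prefix (slot_labels c @ slots_labels cs) (drop k us)"
    and "open_column us cols k0 k (length cs)"
  shows "fill_run us cols p (slot_word c @ slots_word cs)
    = (overwrite cols k (slots_tableau (c # cs) p))[k0 := cols ! k0 @ column_entries (p + length (slot_word c) + 1) cs]"
proof -
  let ?l = "length (slot_labels c)" and ?T = "slot_tableau c p"
  from assms(5) have us: "prefix (slot_labels c) (drop k us)" "prefix (slots_labels cs) (drop (k + ?l) us)"
    by (auto dest: prefix_drop_appendD)
  have len: "k + ?l \<le> length cols"
    using assms(4) prefix_drop_length[OF us(1)] by (simp add: filled_def)
  define cols' where "cols' = overwrite cols k ?T"
  have "filled us cols' (k + ?l) (p + length (slot_word c))"
    unfolding cols'_def using filled_overwrite_slot[OF assms(4,3) us(1)] .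
  moreover have "open_column us cols' k0 (k + ?l) (length cs)"
    unfolding cols'_def using open_column_overwrite_slot[OF assms(6,3) us(1) len] .
  moreover have "cols' ! k0 = cols ! k0"
    using assms(6) len by (simp add: cols'_def open_column_def nth_overwrite length_tableau)
  ultimately show ?thesis
    using run_slot[OF assms(4) us(1)] run_slots[OF _ us(2)] len
    by (simp add: fill_run_append cols'_def length_tableau overwrite_append)
qed

lemma fill_run_word:
  "wf_tree t \<Longrightarrow> filled us cols k p \<Longrightarrow> prefix (labels t) (drop k us) \<Longrightarrow>
     fill_run us cols p (word t) = overwrite cols k (tableau t p)"
  "wf_slot c \<Longrightarrow> filled us cols k p \<Longrightarrow> prefix (slot_labels c) (drop k us) \<Longrightarrow>
     fill_run us cols p (slot_word c) = overwrite cols k (slot_tableau c p)"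
  "wf_slots cs \<Longrightarrow> filled us cols k q \<Longrightarrow> prefix (slots_labels cs) (drop k us) \<Longrightarrow>
     open_column us cols k0 k (length cs) \<Longrightarrow>
     fill_run us cols q (slots_word cs)
     = (overwrite cols k (slots_tableau cs (Suc q)))[k0 := cols ! k0 @ column_entries (Suc q) cs]"
proof (induction t and c and cs arbitrary: cols k p and cols k p and cols k k0 q
    rule: word_slot_word_slots_word.induct)
  case (2 u c cs)
  have wf: "wf_slot c" "length cs = u" using "2.prems"(1) by auto
  from "2.prems"(3) have "us ! k = u" "k < length us" and us: "prefix (slot_labels c @ slots_labels cs) (drop (Suc k) us)"
    using prefix_drop_ConsD[of u _ k us] by auto
  then have "k < length cols" using "2.prems"(2) by (simp add: filled_def)
  let ?cols = "cols[k := [Suc p]]"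
  have "place_S cols (Suc p) = ?cols"
    using "2.prems"(2) \<open>k < length cols\<close> by (intro place_S_eq) (auto simp: filled_def)
  moreover have "filled us ?cols (Suc k) (Suc p)" "open_column us ?cols k (Suc k) (length cs)"
    using filled_start_column[OF "2.prems"(2)] open_column_start[OF "2.prems"(2)] \<open>k < length cols\<close>
      \<open>us ! k = u\<close> wf(2) by simp_all
  ultimately show ?case
    using fill_run_slot_slots[OF "2.IH"(1)[OF wf(1)] "2.IH"(2)[OF _] wf(1) _ us] "2.prems"(1) \<open>k < length cols\<close>
    by (simp add: overwrite_list_update overwrite_Cons)
next
  case (3 cols k p)
  then show ?case by (simp add: filled_def)
next
  case (5 cols k k0 q)
  then show ?case by (simp add: filled_def)
next
  case (6 c cs cols k k0 q)
  have "k0 < k" "k0 < length cols" using "6.prems"(2,4) by (auto simp: filled_def open_column_def)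
  let ?cols = "cols[k0 := cols ! k0 @ [Suc q]]"
  have "place_W us cols (Suc q) = ?cols"
    using place_W_eq "6.prems"(2,4) by simp
  moreover have "filled us ?cols k (Suc q)" "open_column us ?cols k0 k (length cs)"
    using filled_extend_column open_column_extend "6.prems"(2,4) \<open>k0 < k\<close> by (blast, simp)
  ultimately show ?case
    using fill_run_slot_slots[OF "6.IH"(1) "6.IH"(2)] "6.prems"(1,3) \<open>k0 < k\<close> \<open>k0 < length cols\<close>
    by (simp add: overwrite_list_update)
qed simp_all

lemma filling_word:
  assumes "wf_tree t"
  shows "filling (word t) = tableau t 0"
proof -
  obtain u v where "word t = S u # v"
    by (cases t rule: word.cases) auto
  then have "filling (word t) = fill_run (labels t) (replicate (length (labels t)) []) 0 (word t)"
    unfolding ups_word(1)[symmetric] by (rule filling_eq_fill_run)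
  also have "\<dots> = overwrite (replicate (length (labels t)) []) 0 (tableau t 0)"
    by (rule fill_run_word(1)[OF assms]) (auto simp: filled_def)
  also have "\<dots> = tableau t 0"
    by (simp add: overwrite_all length_tableau)
  finally show ?thesis .
qed

section \<open>Depth\<close>

declare entry_rank.simps [simp del]

lemma entry_rank_nth:
  assumes "distinct (concat F)" "j < length F" "r < length (F ! j)"
  shows "entry_rank F (F ! j ! r) =
    (if F ! j ! r = 0 \<or> j = 0 \<or> \<not> hd (F ! j) \<le> F ! j ! r then r else entry_rank F (hd (F ! j) - 1) + r)"
proof -
  let ?e = "F ! j ! r"
  have "(SOME j'. j' < length F \<and> ?e \<in> set (F ! j')) = j"
    using assms distinct_concat_unique_index[OF assms(1)] by (intro some_equality) auto
  moreover have "(LEAST r'. r' < length (F ! j) \<and> F ! j ! r' = ?e) = r"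
    using assms distinct_concat_iff[of F] nth_mem[OF assms(2)]
    by (intro Least_equality) (auto simp: nth_eq_iff_index_eq not_less[symmetric])
  ultimately show ?thesis
    by (subst entry_rank.simps) (simp only: Let_def)
qed

lemma column_entries_ge: "e \<in> set (column_entries q cs) \<Longrightarrow> q \<le> e"
  by (induction cs arbitrary: q) (auto, fastforce)

lemma entry_rank_column:
  assumes "distinct (concat F)" "k < length F" "F ! k = column_entries (Suc p) cs" "cs \<noteq> []"
    and "r < length (F ! k)"
  shows "entry_rank F (F ! k ! r) = (if k = 0 then 0 else entry_rank F p) + r"
proof -
  have "Suc p \<le> F ! k ! r" using assms(3,5) column_entries_ge nth_mem by metis
  moreover have "hd (F ! k) = Suc p" using assms(3,4) by (cases cs) auto
  ultimately show ?thesis using entry_rank_nth[OF assms(1,2,5)] by auto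
qed

lemma entry_rank_tableau:
  assumes F: "distinct (concat F)"
  shows
  "wf_tree t \<Longrightarrow> prefix (tableau t p) (drop k F) \<Longrightarrow> \<beta> = (if k = 0 then 0 else entry_rank F p) \<Longrightarrow>
     (\<forall>r<length (F ! k). entry_rank F (F ! k ! r) = \<beta> + r) \<and>
     (\<Sum>j = Suc k..<k + length (labels t). entry_rank F (hd (F ! j) - 1))
       = tree_weight (\<lambda>u i. i) t + \<beta> * (length (labels t) - 1)"
  "wf_slot c \<Longrightarrow> prefix (slot_tableau c q) (drop k F) \<Longrightarrow> 0 < k \<Longrightarrow>
     (\<Sum>j = k..<k + length (slot_labels c). entry_rank F (hd (F ! j) - 1))
       = slot_weight (\<lambda>u i. i) (entry_rank F q) c"
  "wf_slots cs \<Longrightarrow> prefix (slots_tableau cs q) (drop k F) \<Longrightarrow> 0 < k \<Longrightarrow>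
     (\<forall>i<length cs. entry_rank F (column_entries q cs ! i) = b + m + i) \<Longrightarrow>
     (\<Sum>j = k..<k + length (slots_labels cs). entry_rank F (hd (F ! j) - 1))
       = slots_weight (\<lambda>u i. i) u m cs + b * length (slots_labels cs)"
proof (induction t p and c q and cs q arbitrary: k \<beta> and k and k b m u
    rule: tableau_slot_tableau_slots_tableau.induct)
  case (1 u cs p)
  from "1.prems"(1) obtain c cs' where cs: "cs = c # cs'" and wf: "wf_slots cs" by (cases cs) auto
  from "1.prems"(2) have "prefix (column_entries (Suc p) cs # slots_tableau cs (Suc p)) (drop k F)"
    by simp
  note col = prefix_drop_ConsD[OF this]
  have ranks: "\<forall>r<length (F ! k). entry_rank F (F ! k ! r) = \<beta> + r"
    using entry_rank_column[OF F col(1,2)] cs "1.prems"(3) by simp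
  moreover have "(\<Sum>j = Suc k..<Suc k + length (slots_labels cs). entry_rank F (hd (F ! j) - 1))
      = slots_weight (\<lambda>u i. i) u 0 cs + \<beta> * length (slots_labels cs)"
    using "1.IH"[OF wf col(3), of \<beta> 0 u] ranks col(2) by simp
  ultimately show ?case by simp
next
  case (3 t q)
  obtain u c cs where t: "t = Node u (c # cs)" using "3.prems"(1) by (cases t rule: word.cases) auto
  let ?n = "length (labels t)"
  have "prefix (column_entries (Suc q) (c # cs) # slots_tableau (c # cs) (Suc q)) (drop k F)"
    using "3.prems"(2) t by (simp del: column_entries.simps slots_tableau.simps)
  then have hd: "hd (F ! k) = Suc q" by (simp add: prefix_drop_ConsD(2))
  have "(\<Sum>j = k..<k + ?n. entry_rank F (hd (F ! j) - 1))
      = entry_rank F (hd (F ! k) - 1) + (\<Sum>j = Suc k..<k + ?n. entry_rank F (hd (F ! j) - 1))"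
    using t by (intro sum.atLeast_Suc_lessThan) simp
  also have "\<dots> = entry_rank F q * ?n + tree_weight (\<lambda>u i. i) t"
    using "3.IH"[of k "entry_rank F q"] "3.prems" hd t by (simp add: algebra_simps)
  finally show ?case by simp
next
  case (5 c cs q)
  let ?q = "q + length (slot_word c) + 1" and ?l = "length (slot_labels c)"
  have wf: "wf_slot c" "wf_slots cs" using "5.prems"(1) by auto
  have pre: "prefix (slot_tableau c q) (drop k F)" "prefix (slots_tableau cs ?q) (drop (k + ?l) F)"
    using prefix_drop_appendD[of "slot_tableau c q" _ k F] "5.prems"(2) by (simp_all add: length_tableau)
  have "(\<Sum>j = k..<k + ?l. entry_rank F (hd (F ! j) - 1)) = slot_weight (\<lambda>u i. i) m c + b * ?l"
    using "5.IH"(1)[OF wf(1) pre(1) "5.prems"(3)] "5.prems"(4)[rule_format, of 0]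
      slot_weight_shift[of _ m b c] by (simp add: add.commute)
  moreover have "(\<Sum>j = k + ?l..<k + ?l + length (slots_labels cs). entry_rank F (hd (F ! j) - 1))
      = slots_weight (\<lambda>u i. i) u (Suc m) cs + b * length (slots_labels cs)"
    using "5.IH"(2)[OF wf(2) pre(2), of b "Suc m" u] "5.prems"(3,4) by fastforce
  ultimately show ?case
    using sum.atLeastLessThan_concat[of k "k + ?l" "k + ?l + length (slots_labels cs)"
        "\<lambda>j. entry_rank F (hd (F ! j) - 1)"]
    by (simp add: algebra_simps)
qed simp_all

lemma depth_word:
  assumes "wf_tree t"
  shows "depth (word t) = tree_weight (\<lambda>u i. i) t"
proof -
  let ?F = "tableau t 0" and ?n = "length (labels t)"
  have n: "length ?F = ?n" "0 < ?n" by (cases t; simp add: length_tableau)+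
  have "depth (word t) = (\<Sum>j = 0..<?n. if j = 0 then 0 else entry_rank ?F (hd (?F ! j) - 1))"
    by (simp add: depth_def depth_seq_def Let_def filling_word[OF assms] n
        sum_set_upt_conv_sum_list_nat[symmetric])
  also have "\<dots> = (\<Sum>j = Suc 0..<?n. entry_rank ?F (hd (?F ! j) - 1))"
    using n by (simp add: sum.atLeast_Suc_lessThan)
  also have "\<dots> = tree_weight (\<lambda>u i. i) t"
    using entry_rank_tableau(1)[OF distinct_tableau[OF assms] assms, of 0 0 0] by simp
  finally show ?thesis .
qed

lemma labels_mirror_in_aK: "labels t \<in> aK a k \<Longrightarrow> labels (mirror t) \<in> aK a k"
proof (cases t)
  case (Node u cs)
  assume "labels t \<in> aK a k"
  moreover have "mset (labels (mirror t)) = mset (labels t)" by (rule mset_labels_mirror)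
  ultimately show ?thesis
    using Node by (auto simp: aK_def)
qed

lemma dyck_paths_aK_eq_image:
  assumes "\<forall>x\<in>set k. 0 < x" "0 < a"
  shows "dyck_paths_aK a k = word ` {t. wf_tree t \<and> labels t \<in> aK a k}"
proof
  show "dyck_paths_aK a k \<subseteq> word ` {t. wf_tree t \<and> labels t \<in> aK a k}"
  proof
    fix w assume "w \<in> dyck_paths_aK a k"
    then obtain u where u: "u \<in> aK a k" "w \<in> dyck_paths u" by (auto simp: dyck_paths_aK_def)
    then obtain js where "u = a # js" "set js = set k"
      by (auto simp: aK_def) (metis set_mset_mset)
    then have "u \<noteq> []" "\<forall>x\<in>set u. 0 < x" using assms by auto
    with u obtain t where "wf_tree t" "word t = w" using dyck_path_is_word by blast
    moreover from this u(2) have "labels t = u"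
      using ups_word(1) by (auto simp: dyck_paths_def)
    ultimately show "w \<in> word ` {t. wf_tree t \<and> labels t \<in> aK a k}" using u(1) by auto
  qed
  show "word ` {t. wf_tree t \<and> labels t \<in> aK a k} \<subseteq> dyck_paths_aK a k"
    using word_in_dyck_paths by (auto simp: dyck_paths_aK_def)
qed

theorem theorem1p1:
  fixes k :: "nat list" and a :: nat and q t :: "'r::comm_ring_1"
  assumes "\<forall>x\<in>set k. x > 0" and "a > 0"
  shows "(\<Sum>\<pi>\<in>dyck_paths_aK a k. q ^ nat (area \<pi>) * t ^ depth \<pi>)
       = (\<Sum>\<pi>\<in>dyck_paths_aK a k. t ^ nat (area \<pi>) * q ^ depth \<pi>)"
proof -
  let ?T = "{\<tau>. wf_tree \<tau> \<and> labels \<tau> \<in> aK a k}"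
  let ?A = "tree_weight (\<lambda>u i. u - i)" and ?D = "tree_weight (\<lambda>u i. i)"
  have "inj_on word ?T"
    using word_inj(1) by (auto intro: inj_onI)
  then have sum_trees: "(\<Sum>\<pi>\<in>dyck_paths_aK a k. f (nat (area \<pi>)) (depth \<pi>)) = (\<Sum>\<tau>\<in>?T. f (?A \<tau>) (?D \<tau>))"
    for f :: "nat \<Rightarrow> nat \<Rightarrow> 'r"
    by (simp add: dyck_paths_aK_eq_image[OF assms] sum.reindex area_word depth_word)
  have "?A (mirror \<tau>) = ?D \<tau>" "?D (mirror \<tau>) = ?A \<tau>" if "wf_tree \<tau>" for \<tau>
    using tree_weight_mirror[OF that] by simp_all
  then have "(\<Sum>\<tau>\<in>?T. q ^ ?A \<tau> * t ^ ?D \<tau>) = (\<Sum>\<tau>\<in>?T. q ^ ?D \<tau> * t ^ ?A \<tau>)"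
    by (intro sum.reindex_bij_witness[of _ mirror mirror]) (auto intro: labels_mirror_in_aK)
  then show ?thesis
    using sum_trees[of "\<lambda>x y. q ^ x * t ^ y"] sum_trees[of "\<lambda>x y. t ^ x * q ^ y"] by (simp add: mult.commute)
qed

end
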